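(* Let $\mathbf v\in\mathbb R^{n\times m}_{<0}$ with $n\ge2$. For each pair $\{i,i'\}$ of distinct agents let $\mathbf v^{\{i,i'\}}$ be the $2\times m$ matrix consisting of rows $i$ and $i'$ of $\mathbf v$. Let $\mathcal G(\mathbf v)$ be the set of all bipartite graphs $G$ on $([n],[m])$ obtained as follows: choose for every pair $\{i,i'\}$ a graph $G^{\{i,i'\}}\in\mathrm{MWW}(\mathbf v^{\{i,i'\}})$ (on agents $\{i,i'\}$ and chores $[m]$), and put an edge $(i,j)$ in $G$ iff $(i,j)$ is an edge of $G^{\{i,i'\}}$ for every $i'\ne i$. Then $|\mathcal G(\mathbf v)|\le(2m+1)^{n(n-1)/2}$ and $\mathrm{MWW}(\mathbf v)\subseteq\mathcal G(\mathbf v)$.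
   Context: For a matrix $\mathbf w\in\mathbb R^{k\times m}_{<0}$ with rows indexed by an agent set $A$ and $\tau\in\mathbb R^A_{>0}$, $G_\tau(\mathbf w)$ is the bipartite graph on $(A,[m])$ with edge $(i,j)$ iff $\tau_i|w_{i,j}|\le\tau_{i'}|w_{i',j}|$ for all $i'\in A$; $\mathrm{MWW}(\mathbf w)=\{G_\tau(\mathbf w):\tau\in\mathbb R^A_{>0}\}$. *)

theory Defs
  imports Complex_Main
begin

text \<open>A matrix w with rows indexed by an agent set A and columns (chores) {0..<m}
  is a function nat => nat => real; only entries w i j with i in A, j < m matter.\<close>

definition G_tau :: "nat set \<Rightarrow> nat \<Rightarrow> (nat \<Rightarrow> nat \<Rightarrow> real) \<Rightarrow> (nat \<Rightarrow> real) \<Rightarrow> (nat \<times> nat) set" where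
  "G_tau A m w \<tau> = {(i, j). i \<in> A \<and> j < m \<and>
      (\<forall>i'\<in>A. \<tau> i * \<bar>w i j\<bar> \<le> \<tau> i' * \<bar>w i' j\<bar>)}"

definition MWW :: "nat set \<Rightarrow> nat \<Rightarrow> (nat \<Rightarrow> nat \<Rightarrow> real) \<Rightarrow> (nat \<times> nat) set set" where
  "MWW A m w = {G_tau A m w \<tau> | \<tau>. \<forall>i\<in>A. \<tau> i > 0}"

definition pairG :: "nat \<Rightarrow> nat \<Rightarrow> (nat \<Rightarrow> nat \<Rightarrow> real) \<Rightarrow> (nat \<times> nat) set set" where
  "pairG n m v = {G. \<exists>C :: nat set \<Rightarrow> (nat \<times> nat) set.
      (\<forall>i<n. \<forall>i'<n. i \<noteq> i' \<longrightarrow> C {i, i'} \<in> MWW {i, i'} m v) \<and>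
      G = {(i, j). i < n \<and> j < m \<and> (\<forall>i'<n. i' \<noteq> i \<longrightarrow> (i, j) \<in> C {i, i'})}}"

end

theory Submission
  imports Defs "HOL-Library.FuncSet"
begin

text \<open>For two agents a and b, the graph G_tau depends only on the ratio r = tau b / tau a, and
  after complementing the edges of agent a it shrinks as r grows. So the graphs of MWW for a pair
  form a chain of subsets of a 2m-element set, and there are at most 2m + 1 of them. A graph in
  calG(v) is determined by one such graph per pair of agents, which gives the bound. Finally,
  tau i |w i j| is minimal among all agents iff it is minimal within every pair containing i, so
  each G_tau is the graph in calG(v) obtained by choosing the same tau for all pairs.\<close>

lemma card_chain_le_Suc_card:
  assumes "finite U" and "\<C> \<subseteq> Pow U" and "chain\<^sub>\<subseteq> \<C>"
  shows "card \<C> \<le> Suc (card U)"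
proof -
  have "inj_on card \<C>"
  proof (rule inj_onI)
    fix X Y assume "X \<in> \<C>" and "Y \<in> \<C>" and card_eq: "card X = card Y"
    then have "finite X" and "finite Y"
      using assms(1,2) finite_subset by blast+
    from \<open>X \<in> \<C>\<close> \<open>Y \<in> \<C>\<close> have "X \<subseteq> Y \<or> Y \<subseteq> X"
      using assms(3) unfolding chain_subset_def by blast
    then show "X = Y"
    proof
      assume "X \<subseteq> Y"
      from \<open>finite Y\<close> this card_eq show "X = Y" by (rule card_subset_eq)
    next
      assume "Y \<subseteq> X"
      from \<open>finite X\<close> this card_eq[symmetric] show "X = Y" by (rule card_subset_eq[symmetric])
    qed
  qed
  moreover have "card ` \<C> \<subseteq> {..card U}"
    using assms(2) by (auto intro: card_mono[OF assms(1)])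
  ultimately have "card \<C> \<le> card {..card U}"
    by (rule card_inj_on_le) simp
  then show ?thesis by simp
qed

lemma card_image_PiE_le:
  assumes "finite P" and "\<And>p. p \<in> P \<Longrightarrow> finite (M p)" and "\<And>p. p \<in> P \<Longrightarrow> card (M p) \<le> k"
  shows "card (f ` (\<Pi>\<^sub>E p\<in>P. M p)) \<le> k ^ card P"
proof -
  have "card (f ` (\<Pi>\<^sub>E p\<in>P. M p)) \<le> card (\<Pi>\<^sub>E p\<in>P. M p)"
    using assms(1,2) by (intro card_image_le finite_PiE)
  also have "\<dots> = (\<Prod>p\<in>P. card (M p))"
    using assms(1) by (rule card_PiE)
  also have "\<dots> \<le> (\<Prod>p\<in>P. k)"
    using assms(3) by (intro prod_mono) simp
  also have "\<dots> = k ^ card P"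
    by simp
  finally show ?thesis .
qed

lemma G_tau_in_MWW:
  assumes "\<forall>i\<in>A. \<tau> i > 0"
  shows "G_tau A m w \<tau> \<in> MWW A m w"
  using assms unfolding MWW_def by blast

lemma G_tau_eq_Inter_pairs:
  "G_tau A m w \<tau> =
     {(i, j). i \<in> A \<and> j < m \<and> (\<forall>i'\<in>A. i' \<noteq> i \<longrightarrow> (i, j) \<in> G_tau {i, i'} m w \<tau>)}"
  unfolding G_tau_def by auto

definition pair_graph :: "nat \<Rightarrow> nat \<Rightarrow> nat \<Rightarrow> (nat \<Rightarrow> nat \<Rightarrow> real) \<Rightarrow> real \<Rightarrow> (nat \<times> nat) set" where
  "pair_graph a b m w r =
     {(a, j) | j. j < m \<and> \<bar>w a j\<bar> \<le> r * \<bar>w b j\<bar>} \<union> {(b, j) | j. j < m \<and> r * \<bar>w b j\<bar> \<le> \<bar>w a j\<bar>}"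

lemma G_tau_pair_eq_pair_graph:
  assumes "a \<noteq> b" and "\<tau> a > 0"
  shows "G_tau {a, b} m w \<tau> = pair_graph a b m w (\<tau> b / \<tau> a)"
proof -
  have "\<tau> a * x \<le> \<tau> b * y \<longleftrightarrow> x \<le> \<tau> b / \<tau> a * y"
    and "\<tau> b * y \<le> \<tau> a * x \<longleftrightarrow> \<tau> b / \<tau> a * y \<le> x" for x y :: real
    using assms(2) by (simp_all add: field_simps)
  then show ?thesis
    using assms(1) unfolding G_tau_def pair_graph_def by auto
qed

lemma pair_graph_flip:
  assumes "a \<noteq> b"
  shows "sym_diff (pair_graph a b m w r) ({a} \<times> {..<m}) =
    {(a, j) | j. j < m \<and> r * \<bar>w b j\<bar> < \<bar>w a j\<bar>} \<union> {(b, j) | j. j < m \<and> r * \<bar>w b j\<bar> \<le> \<bar>w a j\<bar>}"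
  using assms unfolding pair_graph_def by auto

lemma pair_graph_flip_antimono:
  assumes "a \<noteq> b" and "r \<le> s"
  shows "sym_diff (pair_graph a b m w s) ({a} \<times> {..<m})
       \<subseteq> sym_diff (pair_graph a b m w r) ({a} \<times> {..<m})"
proof -
  have "r * \<bar>w b j\<bar> \<le> s * \<bar>w b j\<bar>" for j
    using assms(2) by (simp add: mult_right_mono)
  then have "s * \<bar>w b j\<bar> < \<bar>w a j\<bar> \<Longrightarrow> r * \<bar>w b j\<bar> < \<bar>w a j\<bar>"
    and "s * \<bar>w b j\<bar> \<le> \<bar>w a j\<bar> \<Longrightarrow> r * \<bar>w b j\<bar> \<le> \<bar>w a j\<bar>" for j
    by (meson order_le_less_trans order_trans)+
  then show ?thesis
    unfolding pair_graph_flip[OF assms(1)] by auto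
qed

lemma
  assumes "a \<noteq> b"
  shows finite_range_pair_graph: "finite (range (pair_graph a b m w))"
    and card_range_pair_graph_le: "card (range (pair_graph a b m w)) \<le> 2 * m + 1"
proof -
  define flip where "flip G = sym_diff G ({a} \<times> {..<m})" for G :: "(nat \<times> nat) set"
  define \<C> where "\<C> = flip ` range (pair_graph a b m w)"
  have "inj flip"
    by (rule inj_on_inverseI[where g = flip]) (auto simp: flip_def)
  then have card_eq: "card \<C> = card (range (pair_graph a b m w))"
    and finite_iff: "finite \<C> \<longleftrightarrow> finite (range (pair_graph a b m w))"
    unfolding \<C>_def by (simp_all add: card_image finite_image_iff inj_on_subset)
  have sub: "\<C> \<subseteq> Pow ({a, b} \<times> {..<m})"
    unfolding \<C>_def flip_def pair_graph_def by auto
  have chain: "chain\<^sub>\<subseteq> \<C>"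
  proof (unfold chain_subset_def \<C>_def, intro ballI)
    fix X Y assume "X \<in> flip ` range (pair_graph a b m w)" and "Y \<in> flip ` range (pair_graph a b m w)"
    then obtain r s where "X = flip (pair_graph a b m w r)" and "Y = flip (pair_graph a b m w s)"
      by blast
    then show "X \<subseteq> Y \<or> Y \<subseteq> X"
      using pair_graph_flip_antimono[OF assms, of r s m w] pair_graph_flip_antimono[OF assms, of s r m w]
      unfolding flip_def by (cases "r \<le> s") auto
  qed
  show "finite (range (pair_graph a b m w))"
    using finite_subset[OF sub] finite_iff by simp
  have "card \<C> \<le> Suc (card ({a, b} \<times> {..<m}))"
    using sub chain by (intro card_chain_le_Suc_card) simp_all
  also have "card ({a, b} \<times> {..<m}) = 2 * m"
    using assms by (simp add: card_cartesian_product)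
  finally show "card (range (pair_graph a b m w)) \<le> 2 * m + 1"
    by (simp add: card_eq)
qed

lemma MWW_pair_subset_range_pair_graph:
  assumes "a \<noteq> b"
  shows "MWW {a, b} m w \<subseteq> range (pair_graph a b m w)"
  unfolding MWW_def using G_tau_pair_eq_pair_graph[OF assms] by auto

lemma
  assumes "card p = 2"
  shows finite_MWW_doubleton: "finite (MWW p m w)"
    and card_MWW_doubleton_le: "card (MWW p m w) \<le> 2 * m + 1"
proof -
  obtain a b where p: "p = {a, b}" and "a \<noteq> b"
    using assms unfolding card_2_iff by blast
  have sub: "MWW p m w \<subseteq> range (pair_graph a b m w)"
    unfolding p using \<open>a \<noteq> b\<close> by (rule MWW_pair_subset_range_pair_graph)
  then show "finite (MWW p m w)"
    using finite_range_pair_graph[OF \<open>a \<noteq> b\<close>] by (rule finite_subset)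
  have "card (MWW p m w) \<le> card (range (pair_graph a b m w))"
    using sub finite_range_pair_graph[OF \<open>a \<noteq> b\<close>] by (rule card_mono[rotated])
  also have "\<dots> \<le> 2 * m + 1"
    using \<open>a \<noteq> b\<close> by (rule card_range_pair_graph_le)
  finally show "card (MWW p m w) \<le> 2 * m + 1" .
qed

definition agent_pairs :: "nat \<Rightarrow> nat set set" where
  "agent_pairs n = {p. p \<subseteq> {..<n} \<and> card p = 2}"

lemma finite_agent_pairs: "finite (agent_pairs n)"
  unfolding agent_pairs_def by simp

lemma card_agent_pairs: "card (agent_pairs n) = n * (n - 1) div 2"
  unfolding agent_pairs_def using n_subsets[of "{..<n}" 2] by (simp add: choose_two)

lemma doubleton_in_agent_pairs:
  assumes "i < n" and "i' < n" and "i \<noteq> i'"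
  shows "{i, i'} \<in> agent_pairs n"
  using assms unfolding agent_pairs_def by simp

lemma agent_pairsE:
  assumes "p \<in> agent_pairs n"
  obtains i i' where "p = {i, i'}" and "i \<noteq> i'" and "i < n" and "i' < n"
  using assms unfolding agent_pairs_def card_2_iff by auto

definition intersect_pair_graphs :: "nat \<Rightarrow> nat \<Rightarrow> (nat set \<Rightarrow> (nat \<times> nat) set) \<Rightarrow> (nat \<times> nat) set" where
  "intersect_pair_graphs n m C = {(i, j). i < n \<and> j < m \<and> (\<forall>i'<n. i' \<noteq> i \<longrightarrow> (i, j) \<in> C {i, i'})}"

lemma intersect_pair_graphs_cong:
  assumes "\<And>i i'. i < n \<Longrightarrow> i' < n \<Longrightarrow> i' \<noteq> i \<Longrightarrow> C {i, i'} = C' {i, i'}"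
  shows "intersect_pair_graphs n m C = intersect_pair_graphs n m C'"
  unfolding intersect_pair_graphs_def using assms by auto

lemma mem_pairG_iff:
  "G \<in> pairG n m v \<longleftrightarrow>
     (\<exists>C. (\<forall>i<n. \<forall>i'<n. i \<noteq> i' \<longrightarrow> C {i, i'} \<in> MWW {i, i'} m v) \<and> G = intersect_pair_graphs n m C)"
  unfolding pairG_def intersect_pair_graphs_def by simp

lemma pairG_subset_image_PiE:
  "pairG n m v \<subseteq> intersect_pair_graphs n m ` (\<Pi>\<^sub>E p\<in>agent_pairs n. MWW p m v)"
proof
  fix G assume "G \<in> pairG n m v"
  then obtain C where C: "\<forall>i<n. \<forall>i'<n. i \<noteq> i' \<longrightarrow> C {i, i'} \<in> MWW {i, i'} m v"
    and G: "G = intersect_pair_graphs n m C"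
    unfolding mem_pairG_iff by blast
  have "C p \<in> MWW p m v" if "p \<in> agent_pairs n" for p
  proof -
    from that obtain i i' where "p = {i, i'}" and "i \<noteq> i'" and "i < n" and "i' < n"
      by (rule agent_pairsE)
    then show ?thesis using C by simp
  qed
  then have "restrict C (agent_pairs n) \<in> (\<Pi>\<^sub>E p\<in>agent_pairs n. MWW p m v)"
    by (simp add: restrict_PiE_iff)
  moreover have "restrict C (agent_pairs n) {i, i'} = C {i, i'}" if "i < n" and "i' < n" and "i' \<noteq> i" for i i'
    using doubleton_in_agent_pairs[OF that(1,2)] that(3) by simp
  then have "intersect_pair_graphs n m (restrict C (agent_pairs n)) = G"
    unfolding G by (rule intersect_pair_graphs_cong)
  ultimately show "G \<in> intersect_pair_graphs n m ` (\<Pi>\<^sub>E p\<in>agent_pairs n. MWW p m v)"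
    by blast
qed

lemma G_tau_in_pairG:
  assumes "\<forall>i<n. \<tau> i > 0"
  shows "G_tau {0..<n} m v \<tau> \<in> pairG n m v"
  unfolding mem_pairG_iff
proof (intro exI[where x = "\<lambda>p. G_tau p m v \<tau>"] conjI)
  show "\<forall>i<n. \<forall>i'<n. i \<noteq> i' \<longrightarrow> G_tau {i, i'} m v \<tau> \<in> MWW {i, i'} m v"
    using assms by (auto intro: G_tau_in_MWW)
  show "G_tau {0..<n} m v \<tau> = intersect_pair_graphs n m (\<lambda>p. G_tau p m v \<tau>)"
    unfolding G_tau_eq_Inter_pairs[of "{0..<n}"] intersect_pair_graphs_def
    by (simp add: atLeast0LessThan Ball_def)
qed

lemma MWW_subset_pairG: "MWW {0..<n} m v \<subseteq> pairG n m v"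
  unfolding MWW_def using G_tau_in_pairG by auto

theorem proposition2:
  fixes n m :: nat and v :: "nat \<Rightarrow> nat \<Rightarrow> real"
  assumes "n \<ge> 2"
    and "\<forall>i<n. \<forall>j<m. v i j < 0"
  shows "card (pairG n m v) \<le> (2 * m + 1) ^ (n * (n - 1) div 2)
    \<and> MWW {0..<n} m v \<subseteq> pairG n m v"
proof
  let ?choices = "\<Pi>\<^sub>E p\<in>agent_pairs n. MWW p m v"
  have finite_MWW: "finite (MWW p m v)" and card_MWW: "card (MWW p m v) \<le> 2 * m + 1"
    if "p \<in> agent_pairs n" for p
    using that unfolding agent_pairs_def by (blast intro: finite_MWW_doubleton card_MWW_doubleton_le)+
  have "finite ?choices"
    using finite_agent_pairs finite_MWW by (rule finite_PiE)
  then have "card (pairG n m v) \<le> card (intersect_pair_graphs n m ` ?choices)"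
    by (intro card_mono[OF finite_imageI pairG_subset_image_PiE])
  also have "\<dots> \<le> (2 * m + 1) ^ card (agent_pairs n)"
    using finite_agent_pairs finite_MWW card_MWW by (rule card_image_PiE_le)
  finally show "card (pairG n m v) \<le> (2 * m + 1) ^ (n * (n - 1) div 2)"
    unfolding card_agent_pairs .
qed (rule MWW_subset_pairG)

end
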